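(* Let $\varphi\colon\mathcal{M}\to\mathcal{X}$ be a smooth lift that does not satisfy "2 $\Rightarrow$ 1" at $y\in\mathcal{M}$, and let $x=\varphi(y)$. Then $W_y\setminus(\mathrm{T}_x\mathcal{X})^*\neq\emptyset$, and for every $w$ in this set there exists $\alpha>0$ such that, with $f(x')=\langle w,x'\rangle+\tfrac{\alpha}{2}\|x'-x\|^2$, the point $y$ is 2-critical for $g=f\circ\varphi$ but $x$ is not stationary for $f$ on $\mathcal{X}$.
   Context: $\mathcal{E}$ is a finite-dimensional real inner product space, $\mathcal{M}$ a smooth manifold, and $\varphi\colon\mathcal{M}\to\mathcal{E}$ smooth with $\varphi(\mathcal{M})=\mathcal{X}$. Tangent cone: $\mathrm{T}_x\mathcal{X}=\{\lim(x_i-x)/\tau_i: x_i\in\mathcal{X},\tau_i>0,\tau_i\to0\}$; $K^*=\{u:\langle u,v\rangle\ge0\ \forall v\in K\}$; $x$ is stationary for $f$ on $\mathcal{X}$ if $\nabla f(x)\in(\mathrm{T}_x\mathcal{X})^*$. $y$ is 2-critical for $g=f\circ\varphi$ if $(g\circ c)'(0)=0$ and $(g\circ c)''(0)\ge0$ for all smooth curves $c$ in $\mathcal{M}$ with $c(0)=y$. "2 $\Rightarrow$ 1" at $y$: for every twice differentiable $f\colon\mathcal{E}\to\mathbb{R}$, if $y$ is 2-critical for $g$ then $\varphi(y)$ is stationary. $W_y$ is the set of $w\in\mathcal{E}$ for which some twice differentiable $f\colon\mathcal{E}\to\mathbb{R}$ has $\nabla f(x)=w$ and $y$ 2-critical for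 $f\circ\varphi$. *)

theory Defs
  imports "HOL-Analysis.Analysis"
begin

text \<open>F vs is the iterated partial
  derivative along the directions in the list vs (innermost first at the end of the list).\<close>
definition smooth_on :: "'a::euclidean_space set \<Rightarrow> ('a \<Rightarrow> 'b::real_normed_vector) \<Rightarrow> bool" where
  "smooth_on S f \<longleftrightarrow> open S \<and>
     (\<exists>F :: 'a list \<Rightarrow> 'a \<Rightarrow> 'b.
        (\<forall>x\<in>S. F [] x = f x) \<and>
        (\<forall>vs. continuous_on S (F vs)) \<and>
        (\<forall>vs. \<forall>v\<in>Basis. \<forall>x\<in>S.
            ((\<lambda>t. F vs (x + t *\<^sub>R v)) has_vector_derivative F (v # vs) x) (at 0)))"

text \<open>A chart is a pair (U, psi): U open in the manifold, psi a homeomorphism of U onto an open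
  subset of the model space 'r.  The manifold is the whole (Hausdorff, second countable) type 'm.\<close>
definition smooth_atlas :: "('m::{t2_space,second_countable_topology} set \<times> ('m \<Rightarrow> 'r::euclidean_space)) set \<Rightarrow> bool" where
  "smooth_atlas A \<longleftrightarrow>
     (\<forall>(U,\<psi>)\<in>A. open U \<and> open (\<psi> ` U) \<and> homeomorphism U (\<psi> ` U) \<psi> (inv_into U \<psi>)) \<and>
     (\<Union>(U,\<psi>)\<in>A. U) = UNIV \<and>
     (\<forall>(U,\<psi>)\<in>A. \<forall>(V,\<theta>)\<in>A. smooth_on (\<psi> ` (U \<inter> V)) (\<theta> \<circ> inv_into U \<psi>))"

definition smooth_map_mfd :: "('m::topological_space set \<times> ('m \<Rightarrow> 'r::euclidean_space)) set \<Rightarrow> ('m \<Rightarrow> 'e::real_normed_vector) \<Rightarrow> bool" where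
  "smooth_map_mfd A \<phi> \<longleftrightarrow> (\<forall>(U,\<psi>)\<in>A. smooth_on (\<psi> ` U) (\<phi> \<circ> inv_into U \<psi>))"

definition smooth_curve_mfd :: "('m::topological_space set \<times> ('m \<Rightarrow> 'r::euclidean_space)) set \<Rightarrow> real set \<Rightarrow> (real \<Rightarrow> 'm) \<Rightarrow> bool" where
  "smooth_curve_mfd A I c \<longleftrightarrow> open I \<and> continuous_on I c \<and>
     (\<forall>(U,\<psi>)\<in>A. smooth_on (I \<inter> c -` U) (\<psi> \<circ> c))"

definition two_critical :: "('m::topological_space set \<times> ('m \<Rightarrow> 'r::euclidean_space)) set \<Rightarrow> ('m \<Rightarrow> real) \<Rightarrow> 'm \<Rightarrow> bool" where
  "two_critical A g y \<longleftrightarrow>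
     (\<forall>\<epsilon>>0. \<forall>c. smooth_curve_mfd A {-\<epsilon><..<\<epsilon>} c \<and> c 0 = y \<longrightarrow>
        deriv (g \<circ> c) 0 = 0 \<and> deriv (deriv (g \<circ> c)) 0 \<ge> 0)"

definition tangent_cone :: "'e::real_inner set \<Rightarrow> 'e \<Rightarrow> 'e set" where
  "tangent_cone X x = {v. \<exists>xs \<tau>. (\<forall>i. xs i \<in> X) \<and> (\<forall>i. \<tau> i > (0::real)) \<and>
       \<tau> \<longlonglongrightarrow> 0 \<and> (\<lambda>i. (1 / \<tau> i) *\<^sub>R (xs i - x)) \<longlonglongrightarrow> v}"

definition dual_cone :: "'e::real_inner set \<Rightarrow> 'e set" where
  "dual_cone K = {u. \<forall>v\<in>K. inner u v \<ge> 0}"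

definition grad :: "('e::real_inner \<Rightarrow> real) \<Rightarrow> 'e \<Rightarrow> 'e" where
  "grad f x = (SOME g. (f has_derivative (\<lambda>h. inner g h)) (at x))"

definition twice_differentiable :: "('e::euclidean_space \<Rightarrow> real) \<Rightarrow> bool" where
  "twice_differentiable f \<longleftrightarrow> (\<exists>G. (\<forall>x. (f has_derivative (\<lambda>h. inner (G x) h)) (at x)) \<and>
                                  (\<forall>x. G differentiable (at x)))"

definition stationary :: "('e::euclidean_space \<Rightarrow> real) \<Rightarrow> 'e set \<Rightarrow> 'e \<Rightarrow> bool" where
  "stationary f X x \<longleftrightarrow> grad f x \<in> dual_cone (tangent_cone X x)"

definition two_implies_one :: "('m::topological_space set \<times> ('m \<Rightarrow> 'r::euclidean_space)) set \<Rightarrow> ('m \<Rightarrow> 'e::euclidean_space) \<Rightarrow> 'm \<Rightarrow> bool" where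
  "two_implies_one A \<phi> y \<longleftrightarrow>
     (\<forall>f. twice_differentiable f \<longrightarrow> two_critical A (f \<circ> \<phi>) y \<longrightarrow> stationary f (range \<phi>) (\<phi> y))"

definition W_set :: "('m::topological_space set \<times> ('m \<Rightarrow> 'r::euclidean_space)) set \<Rightarrow> ('m \<Rightarrow> 'e::euclidean_space) \<Rightarrow> 'm \<Rightarrow> 'e set" where
  "W_set A \<phi> y = {w. \<exists>f. twice_differentiable f \<and> grad f (\<phi> y) = w \<and> two_critical A (f \<circ> \<phi>) y}"

end

theory Submission
  imports Defs
begin

(* Take w in W_y with a witness f0, let H be the Hessian of f0 at x = phi y and choose
   alpha > ||H||. Along a smooth curve c through y, with gamma = phi o c, the first two
   derivatives of f o gamma at 0 are <grad f(x), gamma'(0)> and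
   <Hess f(x) gamma'(0), gamma'(0)> + <grad f(x), gamma''(0)>. The regularized function has the
   same gradient w as f0 at x and Hessian alpha I >= H, so it inherits 2-criticality from f0,
   while stationarity at x depends on the gradient w alone. *)

lemma has_vector_derivative_at_from_shift:
  fixes g :: "real \<Rightarrow> 'b::real_normed_vector"
  assumes "((\<lambda>u. g (t + u)) has_vector_derivative v) (at 0)"
  shows "(g has_vector_derivative v) (at t)"
proof -
  have "((\<lambda>\<tau>. \<tau> - t) has_vector_derivative 1) (at t)"
    by (auto intro!: derivative_eq_intros)
  moreover have "((\<lambda>u. g (t + u)) has_vector_derivative v) (at ((\<lambda>\<tau>. \<tau> - t) t))"
    using assms by simp
  ultimately have "(((\<lambda>u. g (t + u)) \<circ> (\<lambda>\<tau>. \<tau> - t)) has_vector_derivative (1 *\<^sub>R v)) (at t)"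
    by (rule vector_diff_chain_at)
  then show ?thesis by (simp add: o_def)
qed

lemma norm_increment_along_direction_le:
  fixes f :: "'a::real_normed_vector \<Rightarrow> 'b::real_normed_vector"
  assumes G: "\<And>z. z \<in> S \<Longrightarrow> ((\<lambda>t. f (z + t *\<^sub>R b)) has_vector_derivative G z) (at 0)"
    and segment: "\<And>t. t \<in> closed_segment 0 s \<Longrightarrow> z + t *\<^sub>R b \<in> S"
    and close: "\<And>t. t \<in> closed_segment 0 s \<Longrightarrow> norm (G (z + t *\<^sub>R b) - Gx) \<le> e"
  shows "norm (f (z + s *\<^sub>R b) - f z - s *\<^sub>R Gx) \<le> \<bar>s\<bar> * (3 * e)"
proof -
  define g where "g t = f (z + t *\<^sub>R b)" for t
  have g': "(g has_vector_derivative G (z + t *\<^sub>R b)) (at t within closed_segment 0 s)"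
    if "t \<in> closed_segment 0 s" for t
  proof -
    have "((\<lambda>u. f ((z + t *\<^sub>R b) + u *\<^sub>R b)) has_vector_derivative G (z + t *\<^sub>R b)) (at 0)"
      using G[OF segment[OF that]] .
    then have "((\<lambda>u. g (t + u)) has_vector_derivative G (z + t *\<^sub>R b)) (at 0)"
      by (simp add: g_def algebra_simps scaleR_add_left)
    then show ?thesis
      using has_vector_derivative_at_from_shift has_vector_derivative_at_within by blast
  qed
  have 0: "(0::real) \<in> closed_segment 0 s" by simp
  have "norm (g s - g 0 - (s - 0) *\<^sub>R G (z + 0 *\<^sub>R b)) \<le> norm (s - 0) * (2 * e)"
  proof (rule vector_differentiable_bound_linearization[OF g' _ _ 0])
    fix t assume t: "t \<in> closed_segment 0 s"
    have "norm (G (z + t *\<^sub>R b) - G z) \<le> norm (G (z + t *\<^sub>R b) - Gx) + norm (G z - Gx)"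
      using norm_triangle_ineq4[of "G (z + t *\<^sub>R b) - Gx" "G z - Gx"] by simp
    also have "\<dots> \<le> 2 * e" using close[OF t] close[OF 0] by simp
    finally show "norm (G (z + t *\<^sub>R b) - G (z + 0 *\<^sub>R b)) \<le> 2 * e" by simp
  qed simp_all
  then have "norm (f (z + s *\<^sub>R b) - f z - s *\<^sub>R G z) \<le> \<bar>s\<bar> * (2 * e)"
    by (simp add: g_def)
  moreover have "norm (s *\<^sub>R G z - s *\<^sub>R Gx) \<le> \<bar>s\<bar> * e"
    using close[OF 0] by (simp add: scaleR_diff_right[symmetric] mult_left_mono)
  moreover have "norm (f (z + s *\<^sub>R b) - f z - s *\<^sub>R Gx)
      \<le> norm (f (z + s *\<^sub>R b) - f z - s *\<^sub>R G z) + norm (s *\<^sub>R G z - s *\<^sub>R Gx)"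
    by (rule order_trans[OF _ norm_triangle_ineq]) (simp add: algebra_simps)
  ultimately show ?thesis by (simp add: algebra_simps)
qed

lemma norm_partial_basis_expansion_le:
  fixes h :: "'a::euclidean_space"
  assumes "B \<subseteq> Basis" "finite B" "b \<in> Basis" "b \<notin> B" "\<bar>t\<bar> \<le> \<bar>h \<bullet> b\<bar>"
  shows "norm ((\<Sum>b'\<in>B. (h \<bullet> b') *\<^sub>R b') + t *\<^sub>R b) \<le> norm h"
proof (rule norm_le_componentwise)
  fix i :: 'a assume i: "i \<in> Basis"
  have "(\<Sum>b'\<in>B. (h \<bullet> b') *\<^sub>R b') \<bullet> i = (\<Sum>b'\<in>B. (h \<bullet> b') * (if b' = i then 1 else 0))"
    unfolding inner_sum_left using assms(1) i by (intro sum.cong) (auto simp: inner_Basis)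
  also have "\<dots> = (if i \<in> B then h \<bullet> i else 0)"
    using assms(2) by (simp add: if_distrib sum.delta' cong: if_cong)
  finally have "((\<Sum>b'\<in>B. (h \<bullet> b') *\<^sub>R b') + t *\<^sub>R b) \<bullet> i
      = (if i \<in> B then h \<bullet> i else 0) + (if i = b then t else 0)"
    using i assms(3) by (auto simp: inner_add_left inner_Basis)
  then show "\<bar>((\<Sum>b'\<in>B. (h \<bullet> b') *\<^sub>R b') + t *\<^sub>R b) \<bullet> i\<bar> \<le> \<bar>h \<bullet> i\<bar>"
    using assms(4,5) by auto
qed

text \<open>Moving from x to x + h one coordinate direction at a time, each step is controlled by the
  mean value inequality for the continuous partial derivative along that direction.\<close>

lemma linearization_along_basis_subset:
  fixes f :: "'a::euclidean_space \<Rightarrow> 'b::real_normed_vector"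
  assumes S: "open S" "x \<in> S"
    and G: "\<And>b z. b \<in> Basis \<Longrightarrow> z \<in> S \<Longrightarrow> ((\<lambda>t. f (z + t *\<^sub>R b)) has_vector_derivative G b z) (at 0)"
    and cont: "\<And>b. b \<in> Basis \<Longrightarrow> isCont (G b) x"
    and B: "finite B" "B \<subseteq> Basis"
    and e: "e > 0"
  shows "\<exists>d>0. \<forall>h. norm h < d \<longrightarrow>
           norm (f (x + (\<Sum>b\<in>B. (h \<bullet> b) *\<^sub>R b)) - f x - (\<Sum>b\<in>B. (h \<bullet> b) *\<^sub>R G b x)) \<le> e * norm h"
  using B e
proof (induction B arbitrary: e rule: finite_induct)
  case empty
  then show ?case by (auto intro: exI[of _ 1])
next
  case (insert b B)
  then have b: "b \<in> Basis" and B: "B \<subseteq> Basis" by auto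
  obtain d1 where "d1 > 0" and d1: "\<And>h. norm h < d1 \<Longrightarrow>
      norm (f (x + (\<Sum>b'\<in>B. (h \<bullet> b') *\<^sub>R b')) - f x - (\<Sum>b'\<in>B. (h \<bullet> b') *\<^sub>R G b' x)) \<le> e/2 * norm h"
    using insert.IH[OF B, of "e/2"] insert.prems by auto
  obtain d2 where "d2 > 0" and d2: "\<And>z. dist z x < d2 \<Longrightarrow> dist (G b z) (G b x) < e/6"
    using cont[OF b, unfolded continuous_at_eps_delta] insert.prems by (metis divide_pos_pos zero_less_numeral)
  obtain d3 where "d3 > 0" and d3: "ball x d3 \<subseteq> S"
    using S open_contains_ball by blast
  have "norm (f (x + (\<Sum>b'\<in>insert b B. (h \<bullet> b') *\<^sub>R b')) - f x - (\<Sum>b'\<in>insert b B. (h \<bullet> b') *\<^sub>R G b' x))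
          \<le> e * norm h" if h: "norm h < min d1 (min d2 d3)" for h
  proof -
    define z where "z = x + (\<Sum>b'\<in>B. (h \<bullet> b') *\<^sub>R b')"
    define s where "s = h \<bullet> b"
    have near: "dist (z + t *\<^sub>R b) x < min d2 d3" if "t \<in> closed_segment 0 s" for t
    proof -
      have "\<bar>t\<bar> \<le> \<bar>s\<bar>"
        using that by (auto simp: closed_segment_eq_real_ivl split: if_splits)
      then have "norm ((\<Sum>b'\<in>B. (h \<bullet> b') *\<^sub>R b') + t *\<^sub>R b) \<le> norm h"
        using norm_partial_basis_expansion_le[OF B insert(1) b insert(2)] by (simp add: s_def)
      then show ?thesis using h by (simp add: z_def dist_norm)
    qed
    have "norm (f (z + s *\<^sub>R b) - f z - s *\<^sub>R G b x) \<le> \<bar>s\<bar> * (3 * (e/6))"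
    proof (rule norm_increment_along_direction_le[where S=S and G="G b"])
      fix t assume "t \<in> closed_segment 0 s"
      with near d3 d2[of "z + t *\<^sub>R b"]
      show "z + t *\<^sub>R b \<in> S" "norm (G b (z + t *\<^sub>R b) - G b x) \<le> e/6"
        by (auto simp: dist_commute dist_norm norm_minus_commute)
    qed (use G b in blast)
    also have "\<dots> \<le> e/2 * norm h"
      using Basis_le_norm[OF b] insert.prems by (simp add: s_def mult_right_mono)
    finally have step: "norm (f (z + s *\<^sub>R b) - f z - s *\<^sub>R G b x) \<le> e/2 * norm h" .
    have rest: "norm (f z - f x - (\<Sum>b'\<in>B. (h \<bullet> b') *\<^sub>R G b' x)) \<le> e/2 * norm h"
      using d1 h by (simp add: z_def)
    have "norm (f (z + s *\<^sub>R b) - f x - (s *\<^sub>R G b x + (\<Sum>b'\<in>B. (h \<bullet> b') *\<^sub>R G b' x)))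
        \<le> norm (f (z + s *\<^sub>R b) - f z - s *\<^sub>R G b x) + norm (f z - f x - (\<Sum>b'\<in>B. (h \<bullet> b') *\<^sub>R G b' x))"
      by (rule order_trans[OF _ norm_triangle_ineq]) (simp add: algebra_simps)
    then show ?thesis
      using step rest insert(1,2) by (simp add: z_def s_def algebra_simps)
  qed
  then show ?case
    using \<open>d1 > 0\<close> \<open>d2 > 0\<close> \<open>d3 > 0\<close> by (intro exI[of _ "min d1 (min d2 d3)"]) auto
qed

lemma has_derivative_of_continuous_partials:
  fixes f :: "'a::euclidean_space \<Rightarrow> 'b::real_normed_vector"
  assumes "open S" "x \<in> S"
    and "\<And>b z. b \<in> Basis \<Longrightarrow> z \<in> S \<Longrightarrow> ((\<lambda>t. f (z + t *\<^sub>R b)) has_vector_derivative G b z) (at 0)"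
    and "\<And>b. b \<in> Basis \<Longrightarrow> isCont (G b) x"
  shows "(f has_derivative (\<lambda>h. \<Sum>b\<in>Basis. (h \<bullet> b) *\<^sub>R G b x)) (at x)"
  unfolding has_derivative_at_alt
proof (intro conjI allI impI)
  show "bounded_linear (\<lambda>h. \<Sum>b\<in>Basis. (h \<bullet> b) *\<^sub>R G b x)"
    by (intro bounded_linear_sum bounded_linear_scaleR_const bounded_linear_inner_left)
  fix e :: real assume "e > 0"
  from linearization_along_basis_subset[OF assms finite_Basis order_refl this]
  obtain d where "d > 0" and d: "\<And>h. norm h < d \<Longrightarrow>
      norm (f (x + (\<Sum>b\<in>Basis. (h \<bullet> b) *\<^sub>R b)) - f x - (\<Sum>b\<in>Basis. (h \<bullet> b) *\<^sub>R G b x)) \<le> e * norm h"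
    by auto
  show "\<exists>d>0. \<forall>y. norm (y - x) < d \<longrightarrow>
          norm (f y - f x - (\<Sum>b\<in>Basis. ((y - x) \<bullet> b) *\<^sub>R G b x)) \<le> e * norm (y - x)"
    using d[of "_ - x"] \<open>d > 0\<close> by (auto simp: euclidean_representation)
qed

lemma smooth_on_has_derivative:
  fixes f :: "'a::euclidean_space \<Rightarrow> 'b::real_normed_vector"
  assumes "smooth_on S f"
  obtains F where "\<And>x. x \<in> S \<Longrightarrow> F [] x = f x"
    and "\<And>vs x. x \<in> S \<Longrightarrow> (F vs has_derivative (\<lambda>h. \<Sum>b\<in>Basis. (h \<bullet> b) *\<^sub>R F (b # vs) x)) (at x)"
proof -
  from assms obtain F where S: "open S" and F0: "\<forall>x\<in>S. F [] x = f x"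
    and cont: "\<forall>vs. continuous_on S (F vs)"
    and partial: "\<forall>vs. \<forall>v\<in>Basis. \<forall>x\<in>S.
                    ((\<lambda>t. F vs (x + t *\<^sub>R v)) has_vector_derivative F (v # vs) x) (at 0)"
    unfolding smooth_on_def by blast
  have "(F vs has_derivative (\<lambda>h. \<Sum>b\<in>Basis. (h \<bullet> b) *\<^sub>R F (b # vs) x)) (at x)" if "x \<in> S" for vs x
    using S that partial cont
    by (intro has_derivative_of_continuous_partials[OF S that]) (auto simp: continuous_on_eq_continuous_at)
  with F0 that show ?thesis by blast
qed

lemma smooth_on_real_has_vector_derivative:
  fixes g :: "real \<Rightarrow> 'b::real_normed_vector"
  assumes "smooth_on T g"
  obtains F :: "real list \<Rightarrow> real \<Rightarrow> 'b" where "\<And>t. t \<in> T \<Longrightarrow> F [] t = g t"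
    and "\<And>vs t. t \<in> T \<Longrightarrow> (F vs has_vector_derivative F (1 # vs) t) (at t)"
proof -
  obtain F where F0: "\<And>t. t \<in> T \<Longrightarrow> F [] t = g t"
    and F': "\<And>vs t. t \<in> T \<Longrightarrow> (F vs has_derivative (\<lambda>h. \<Sum>b\<in>Basis. (h \<bullet> b) *\<^sub>R F (b # vs) t)) (at t)"
    using smooth_on_has_derivative[OF assms] by blast
  have "(F vs has_vector_derivative F (1 # vs) t) (at t)" if "t \<in> T" for vs t
    using F'[OF that] by (simp add: has_vector_derivative_def Basis_real_def)
  with F0 show ?thesis by (rule that[of F])
qed

lemma smooth_map_comp_curve_twice_differentiable:
  fixes A :: "('m::{t2_space,second_countable_topology} set \<times> ('m \<Rightarrow> 'r::euclidean_space)) set"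
    and \<phi> :: "'m \<Rightarrow> 'e::real_normed_vector"
  assumes atlas: "smooth_atlas A" and \<phi>: "smooth_map_mfd A \<phi>"
    and c: "smooth_curve_mfd A I c" and t0: "t0 \<in> I"
  obtains d \<gamma>' \<gamma>'' where "d > 0"
    and "\<And>t. t \<in> ball t0 d \<Longrightarrow> ((\<phi> \<circ> c) has_vector_derivative \<gamma>' t) (at t)"
    and "(\<gamma>' has_vector_derivative \<gamma>'') (at t0)"
proof -
  obtain U \<psi> where chart: "(U, \<psi>) \<in> A" and "c t0 \<in> U"
    using atlas unfolding smooth_atlas_def by blast
  have hom: "homeomorphism U (\<psi> ` U) \<psi> (inv_into U \<psi>)" and "open (\<psi> ` U)"
    using atlas chart unfolding smooth_atlas_def by auto
  define T where "T = I \<inter> c -` U"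
  have "t0 \<in> T" using t0 \<open>c t0 \<in> U\<close> by (simp add: T_def)
  have "smooth_on T (\<psi> \<circ> c)"
    using c chart unfolding smooth_curve_mfd_def T_def by auto
  then have "open T"
    unfolding smooth_on_def by blast
  from \<open>smooth_on T (\<psi> \<circ> c)\<close> obtain C :: "real list \<Rightarrow> real \<Rightarrow> 'r" where C0: "\<And>t. t \<in> T \<Longrightarrow> C [] t = (\<psi> \<circ> c) t"
    and C': "\<And>vs t. t \<in> T \<Longrightarrow> (C vs has_vector_derivative C (1 # vs) t) (at t)"
    using smooth_on_real_has_vector_derivative by blast
  have "smooth_on (\<psi> ` U) (\<phi> \<circ> inv_into U \<psi>)"
    using \<phi> chart unfolding smooth_map_mfd_def by auto
  then obtain P where P0: "\<And>z. z \<in> \<psi> ` U \<Longrightarrow> P [] z = (\<phi> \<circ> inv_into U \<psi>) z"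
    and P': "\<And>vs z. z \<in> \<psi> ` U \<Longrightarrow> (P vs has_derivative (\<lambda>h. \<Sum>b\<in>Basis. (h \<bullet> b) *\<^sub>R P (b # vs) z)) (at z)"
    using smooth_on_has_derivative by blast
  have C_in: "C [] t \<in> \<psi> ` U" if "t \<in> T" for t
    using that C0 by (auto simp: T_def)
  define \<gamma>' where "\<gamma>' t = (\<Sum>b\<in>Basis. (C [1] t \<bullet> b) *\<^sub>R P [b] (C [] t))" for t
  have "((\<phi> \<circ> c) has_vector_derivative \<gamma>' t) (at t)" if "t \<in> T" for t
  proof (rule has_vector_derivative_transform_within_open[OF _ \<open>open T\<close> that])
    show "((\<lambda>s. P [] (C [] s)) has_vector_derivative \<gamma>' t) (at t)"
      using has_derivative_compose[OF C'[OF that, unfolded has_vector_derivative_def] P'[OF C_in[OF that]]]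
      unfolding has_vector_derivative_def \<gamma>'_def by (simp add: scaleR_sum_right)
    show "P [] (C [] s) = (\<phi> \<circ> c) s" if "s \<in> T" for s
      using that P0[OF C_in] C0 homeomorphism_apply1[OF hom] by (auto simp: T_def)
  qed
  moreover obtain d where "d > 0" "ball t0 d \<subseteq> T"
    using \<open>open T\<close> \<open>t0 \<in> T\<close> open_contains_ball by blast
  moreover have "\<gamma>' differentiable (at t0)"
    unfolding \<gamma>'_def
  proof (intro differentiable_sum ballI differentiable_scaleR differentiable_inner differentiable_const)
    show "C [1] differentiable (at t0)"
      using C'[OF \<open>t0 \<in> T\<close>] by (rule differentiableI_vector)
    fix b :: 'r
    have "(P [b] \<circ> C []) differentiable (at t0)"
      using C'[OF \<open>t0 \<in> T\<close>] P'[OF C_in[OF \<open>t0 \<in> T\<close>]]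
      by (intro differentiable_chain_at) (auto intro: differentiableI_vector differentiableI)
    then show "(\<lambda>t. P [b] (C [] t)) differentiable (at t0)" by (simp add: o_def)
  qed simp
  ultimately show ?thesis
    using that vector_derivative_works by blast
qed

lemma second_derivative_along_curve:
  fixes F :: "'e::real_inner \<Rightarrow> real" and \<gamma> :: "real \<Rightarrow> 'e"
  assumes F': "\<And>z. (F has_derivative (\<lambda>h. G z \<bullet> h)) (at z)"
    and G': "(G has_derivative H) (at (\<gamma> t0))"
    and "d > 0" and \<gamma>': "\<And>t. t \<in> ball t0 d \<Longrightarrow> (\<gamma> has_vector_derivative \<gamma>' t) (at t)"
    and \<gamma>'': "(\<gamma>' has_vector_derivative \<gamma>'') (at t0)"
  shows "deriv (F \<circ> \<gamma>) t0 = G (\<gamma> t0) \<bullet> \<gamma>' t0"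
    and "deriv (deriv (F \<circ> \<gamma>)) t0 = H (\<gamma>' t0) \<bullet> \<gamma>' t0 + G (\<gamma> t0) \<bullet> \<gamma>''"
proof -
  have first: "deriv (F \<circ> \<gamma>) t = G (\<gamma> t) \<bullet> \<gamma>' t" if "t \<in> ball t0 d" for t
  proof (rule DERIV_imp_deriv)
    have "((F \<circ> \<gamma>) has_derivative (\<lambda>s. G (\<gamma> t) \<bullet> (s *\<^sub>R \<gamma>' t))) (at t)"
      using diff_chain_at[OF \<gamma>'[OF that, unfolded has_vector_derivative_def] F'] by (simp add: o_def)
    then show "((F \<circ> \<gamma>) has_field_derivative G (\<gamma> t) \<bullet> \<gamma>' t) (at t)"
      unfolding has_field_derivative_def by (rule has_derivative_eq_rhs) (simp add: fun_eq_iff)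
  qed
  then show "deriv (F \<circ> \<gamma>) t0 = G (\<gamma> t0) \<bullet> \<gamma>' t0"
    using \<open>d > 0\<close> by simp
  have "((\<lambda>t. G (\<gamma> t)) has_derivative (\<lambda>s. s *\<^sub>R H (\<gamma>' t0))) (at t0)"
    using has_derivative_compose[OF \<gamma>'[unfolded has_vector_derivative_def] G'] \<open>d > 0\<close>
      linear_scale[OF has_derivative_linear[OF G']]
    by simp
  from has_derivative_inner[OF this \<gamma>''[unfolded has_vector_derivative_def]]
  have "((\<lambda>t. G (\<gamma> t) \<bullet> \<gamma>' t) has_field_derivative H (\<gamma>' t0) \<bullet> \<gamma>' t0 + G (\<gamma> t0) \<bullet> \<gamma>'') (at t0)"
    unfolding has_field_derivative_def by (rule has_derivative_eq_rhs) (simp add: fun_eq_iff algebra_simps)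
  moreover have "eventually (\<lambda>t. t \<in> ball t0 d) (nhds t0)"
    using \<open>d > 0\<close> by (intro eventually_nhds_in_open) auto
  then have "eventually (\<lambda>t. deriv (F \<circ> \<gamma>) t = G (\<gamma> t) \<bullet> \<gamma>' t) (nhds t0)"
    by (rule eventually_mono) (rule first)
  ultimately show "deriv (deriv (F \<circ> \<gamma>)) t0 = H (\<gamma>' t0) \<bullet> \<gamma>' t0 + G (\<gamma> t0) \<bullet> \<gamma>''"
    by (intro DERIV_imp_deriv) (simp add: DERIV_cong_ev)
qed

lemma two_critical_hessian_mono:
  fixes A :: "('m::{t2_space,second_countable_topology} set \<times> ('m \<Rightarrow> 'r::euclidean_space)) set"
    and \<phi> :: "'m \<Rightarrow> 'e::real_inner"
  assumes atlas: "smooth_atlas A" and \<phi>: "smooth_map_mfd A \<phi>"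
    and F0': "\<And>z. (F0 has_derivative (\<lambda>h. G0 z \<bullet> h)) (at z)" and G0': "(G0 has_derivative H0) (at (\<phi> y))"
    and F': "\<And>z. (F has_derivative (\<lambda>h. G z \<bullet> h)) (at z)" and G': "(G has_derivative H) (at (\<phi> y))"
    and same_gradient: "G (\<phi> y) = G0 (\<phi> y)" and hessian_le: "\<And>v. H0 v \<bullet> v \<le> H v \<bullet> v"
    and crit0: "two_critical A (F0 \<circ> \<phi>) y"
  shows "two_critical A (F \<circ> \<phi>) y"
  unfolding two_critical_def
proof (intro allI impI)
  fix \<epsilon> :: real and c assume "\<epsilon> > 0" and c: "smooth_curve_mfd A {-\<epsilon><..<\<epsilon>} c \<and> c 0 = y"
  then obtain d \<gamma>' \<gamma>'' where d: "d > 0"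
    and \<gamma>': "\<And>t. t \<in> ball 0 d \<Longrightarrow> ((\<phi> \<circ> c) has_vector_derivative \<gamma>' t) (at t)"
    and \<gamma>'': "(\<gamma>' has_vector_derivative \<gamma>'') (at 0)"
    using smooth_map_comp_curve_twice_differentiable[OF atlas \<phi>, of "{-\<epsilon><..<\<epsilon>}" c 0] by auto
  have "(\<phi> \<circ> c) 0 = \<phi> y" using c by simp
  note derivs0 = second_derivative_along_curve[OF F0' _ d \<gamma>' \<gamma>'', unfolded this, OF G0']
  note derivs = second_derivative_along_curve[OF F' _ d \<gamma>' \<gamma>'', unfolded \<open>(\<phi> \<circ> c) 0 = \<phi> y\<close>, OF G']
  have "deriv (F0 \<circ> \<phi> \<circ> c) 0 = 0" "deriv (deriv (F0 \<circ> \<phi> \<circ> c)) 0 \<ge> 0"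
    using crit0 \<open>\<epsilon> > 0\<close> c unfolding two_critical_def by blast+
  then show "deriv (F \<circ> \<phi> \<circ> c) 0 = 0 \<and> deriv (deriv (F \<circ> \<phi> \<circ> c)) 0 \<ge> 0"
    using derivs0 derivs same_gradient hessian_le[of "\<gamma>' 0"] by (simp add: o_assoc)
qed

lemma grad_eqI:
  fixes f :: "'e::real_inner \<Rightarrow> real"
  assumes "(f has_derivative (\<lambda>h. g \<bullet> h)) (at x)"
  shows "grad f x = g"
proof -
  have "(f has_derivative (\<lambda>h. grad f x \<bullet> h)) (at x)"
    unfolding grad_def by (rule someI[of _ g]) (rule assms)
  from has_derivative_unique[OF this assms] have "(grad f x - g) \<bullet> (grad f x - g) = 0"
    by (metis inner_diff_left right_minus_eq)
  then show ?thesis by simp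
qed

lemma has_derivative_inner_plus_quadratic:
  fixes w x :: "'e::real_inner"
  shows "((\<lambda>x'. w \<bullet> x' + \<alpha> / 2 * (norm (x' - x))\<^sup>2) has_derivative (\<lambda>h. (w + \<alpha> *\<^sub>R (z - x)) \<bullet> h)) (at z)"
  unfolding power2_norm_eq_inner
  by (auto intro!: derivative_eq_intros simp: algebra_simps inner_add_left inner_diff_left inner_commute)

lemma grad_inner_plus_quadratic:
  fixes w x :: "'e::real_inner"
  shows "grad (\<lambda>x'. w \<bullet> x' + \<alpha> / 2 * (norm (x' - x))\<^sup>2) x = w"
proof (rule grad_eqI)
  show "((\<lambda>x'. w \<bullet> x' + \<alpha> / 2 * (norm (x' - x))\<^sup>2) has_derivative (\<lambda>h. w \<bullet> h)) (at x)"
    using has_derivative_inner_plus_quadratic[of w \<alpha> x x] by simp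
qed

lemma inner_le_onorm:
  assumes "bounded_linear H"
  shows "H v \<bullet> v \<le> onorm H * (v \<bullet> v)"
proof -
  have "H v \<bullet> v \<le> norm (H v) * norm v" by (rule norm_cauchy_schwarz)
  also have "\<dots> \<le> onorm H * norm v * norm v"
    by (intro mult_right_mono onorm[OF assms]) simp
  finally show ?thesis by (simp add: power2_norm_eq_inner[symmetric] power2_eq_square)
qed

lemma two_critical_quadratic_regularization:
  fixes A :: "('m::{t2_space,second_countable_topology} set \<times> ('m \<Rightarrow> 'r::euclidean_space)) set"
    and \<phi> :: "'m \<Rightarrow> 'e::euclidean_space"
  assumes atlas: "smooth_atlas A" and \<phi>: "smooth_map_mfd A \<phi>"
    and "twice_differentiable f0" and crit0: "two_critical A (f0 \<circ> \<phi>) y"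
  shows "\<exists>\<alpha>>0. two_critical A ((\<lambda>x'. grad f0 (\<phi> y) \<bullet> x' + \<alpha> / 2 * (norm (x' - \<phi> y))\<^sup>2) \<circ> \<phi>) y"
proof -
  obtain G where f0': "\<And>z. (f0 has_derivative (\<lambda>h. G z \<bullet> h)) (at z)" and "G differentiable (at (\<phi> y))"
    using \<open>twice_differentiable f0\<close> unfolding twice_differentiable_def by blast
  then obtain H where G': "(G has_derivative H) (at (\<phi> y))"
    unfolding differentiable_def by blast
  define \<alpha> where "\<alpha> = onorm H + 1"
  have "\<alpha> > 0"
    using onorm_pos_le[OF has_derivative_bounded_linear[OF G']] by (simp add: \<alpha>_def)
  have "two_critical A ((\<lambda>x'. G (\<phi> y) \<bullet> x' + \<alpha> / 2 * (norm (x' - \<phi> y))\<^sup>2) \<circ> \<phi>) y"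
  proof (rule two_critical_hessian_mono[OF atlas \<phi> f0' G' has_derivative_inner_plus_quadratic _ _ _ crit0])
    show "((\<lambda>z. G (\<phi> y) + \<alpha> *\<^sub>R (z - \<phi> y)) has_derivative (\<lambda>h. \<alpha> *\<^sub>R h)) (at (\<phi> y))"
      by (auto intro!: derivative_eq_intros)
    show "H v \<bullet> v \<le> \<alpha> *\<^sub>R v \<bullet> v" for v
    proof -
      have "H v \<bullet> v \<le> onorm H * (v \<bullet> v) + v \<bullet> v"
        using inner_le_onorm[OF has_derivative_bounded_linear[OF G'], of v] inner_ge_zero[of v] by linarith
      then show ?thesis by (simp add: \<alpha>_def algebra_simps)
    qed
  qed simp
  with \<open>\<alpha> > 0\<close> grad_eqI[OF f0'] show ?thesis by auto
qed

theorem corollary3p18: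
  fixes A :: "('m::{t2_space,second_countable_topology} set \<times> ('m \<Rightarrow> 'r::euclidean_space)) set"
    and \<phi> :: "'m \<Rightarrow> 'e::euclidean_space"
    and y :: 'm
  assumes "smooth_atlas A"
    and "smooth_map_mfd A \<phi>"
    and "\<not> two_implies_one A \<phi> y"
  shows "W_set A \<phi> y - dual_cone (tangent_cone (range \<phi>) (\<phi> y)) \<noteq> {} \<and>
         (\<forall>w \<in> W_set A \<phi> y - dual_cone (tangent_cone (range \<phi>) (\<phi> y)).
            \<exists>\<alpha>>0. two_critical A ((\<lambda>x'. inner w x' + \<alpha> / 2 * (norm (x' - \<phi> y))\<^sup>2) \<circ> \<phi>) y \<and>
                   \<not> stationary (\<lambda>x'. inner w x' + \<alpha> / 2 * (norm (x' - \<phi> y))\<^sup>2) (range \<phi>) (\<phi> y))"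
proof -
  from assms(3) obtain f where "twice_differentiable f" "two_critical A (f \<circ> \<phi>) y"
    and "\<not> stationary f (range \<phi>) (\<phi> y)"
    unfolding two_implies_one_def by blast
  then have "grad f (\<phi> y) \<in> W_set A \<phi> y - dual_cone (tangent_cone (range \<phi>) (\<phi> y))"
    unfolding W_set_def stationary_def by blast
  moreover have "\<exists>\<alpha>>0. two_critical A ((\<lambda>x'. inner w x' + \<alpha> / 2 * (norm (x' - \<phi> y))\<^sup>2) \<circ> \<phi>) y \<and>
                   \<not> stationary (\<lambda>x'. inner w x' + \<alpha> / 2 * (norm (x' - \<phi> y))\<^sup>2) (range \<phi>) (\<phi> y)"
    if w: "w \<in> W_set A \<phi> y - dual_cone (tangent_cone (range \<phi>) (\<phi> y))" for w
  proof -
    from w obtain f0 where "twice_differentiable f0" "grad f0 (\<phi> y) = w" "two_critical A (f0 \<circ> \<phi>) y"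
      unfolding W_set_def by blast
    then obtain \<alpha> where "\<alpha> > 0" "two_critical A ((\<lambda>x'. w \<bullet> x' + \<alpha> / 2 * (norm (x' - \<phi> y))\<^sup>2) \<circ> \<phi>) y"
      using two_critical_quadratic_regularization[OF assms(1,2)] by blast
    then show ?thesis
      using w grad_inner_plus_quadratic[of w \<alpha> "\<phi> y"] unfolding stationary_def by auto
  qed
  ultimately show ?thesis by blast
qed

end
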